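(* For every $n \geq 6$, $c(\Gamma_n) \leq \left\lceil \frac{n}{3} \right\rceil$.
   Context: The Fibonacci cube $\Gamma_n$ is the subgraph of the hypercube $Q_n$ (vertex set $\{0,1\}^n$, adjacency = differing in exactly one position) induced by all binary strings of length $n$ containing no two consecutive 1's. Cops and Robbers: $k$ cops choose starting vertices, then the robber does; in each round all cops move (to a neighbor or stay), then the robber moves (to a neighbor or stays); cops win if some cop occupies the robber's vertex. The cop number $c(G)$ is the minimum $k$ for which the cops can guarantee capture. *)

theory Defs
  imports Complex_Main
begin

definition move_ok :: "'a set \<Rightarrow> ('a \<Rightarrow> 'a \<Rightarrow> bool) \<Rightarrow> 'a \<Rightarrow> 'a \<Rightarrow> bool" where
  "move_ok V adj v v' \<longleftrightarrow> v' = v \<or> (v' \<in> V \<and> adj v v')"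

definition cops_move_ok :: "'a set \<Rightarrow> ('a \<Rightarrow> 'a \<Rightarrow> bool) \<Rightarrow> 'a list \<Rightarrow> 'a list \<Rightarrow> bool" where
  "cops_move_ok V adj C C' \<longleftrightarrow> length C' = length C \<and> (\<forall>i<length C. move_ok V adj (C!i) (C'!i))"

(* cop_wins V adj C r : cops at positions C, robber at r, cops to move;
   the cops can force capture in finitely many rounds. *)
inductive cop_wins :: "'a set \<Rightarrow> ('a \<Rightarrow> 'a \<Rightarrow> bool) \<Rightarrow> 'a list \<Rightarrow> 'a \<Rightarrow> bool"
  for V adj where
  caught: "r \<in> set C \<Longrightarrow> cop_wins V adj C r"
| step: "\<lbrakk> cops_move_ok V adj C C';
           r \<in> set C' \<or> (\<forall>r'. move_ok V adj r r' \<longrightarrow> cop_wins V adj C' r') \<rbrakk>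
        \<Longrightarrow> cop_wins V adj C r"

definition k_cop_win :: "'a set \<Rightarrow> ('a \<Rightarrow> 'a \<Rightarrow> bool) \<Rightarrow> nat \<Rightarrow> bool" where
  "k_cop_win V adj k \<longleftrightarrow>
     (\<exists>C. length C = k \<and> set C \<subseteq> V \<and> (\<forall>r\<in>V. cop_wins V adj C r))"

definition cop_number :: "'a set \<Rightarrow> ('a \<Rightarrow> 'a \<Rightarrow> bool) \<Rightarrow> nat" where
  "cop_number V adj = (LEAST k. k_cop_win V adj k)"

(* Fibonacci cube Gamma_n: binary strings (bool lists) of length n with no two consecutive 1s;
   adjacency = differing in exactly one position (induced subgraph of Q_n). *)
definition fib_cube_vertices :: "nat \<Rightarrow> bool list set" where
  "fib_cube_vertices n =
     {xs. length xs = n \<and> (\<forall>i. Suc i < n \<longrightarrow> \<not> (xs!i \<and> xs!Suc i))}"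

definition hypercube_adj :: "bool list \<Rightarrow> bool list \<Rightarrow> bool" where
  "hypercube_adj xs ys \<longleftrightarrow>
     length xs = length ys \<and> card {i. i < length xs \<and> xs!i \<noteq> ys!i} = 1"

end

theory Submission
  imports Defs "HOL-Combinatorics.Permutations"
begin

(* Write a vertex of Gamma_(m+4) as s @ k with s in Gamma_m and k in Gamma_4; its shadow is
   s @ 0000. If j cops catch the robber on Gamma_m, then j + 1 cops catch him on Gamma_(m+4).
   The j cops first play their Gamma_m strategy against the shadow, inside the strings ending in
   0000, until one of them stands on it. From then on this cop, the guard, steps onto the new
   shadow every round. The robber can then change his suffix k only by adding a 1, as dropping
   one leaves him next to the guard; a string of Gamma_4 has at most two 1s, so k changes at most
   twice. While k is fixed the robber stays among the strings ending in k, a retract of Gamma_m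
   (clear the last bit of s if it clashes with k). There the other j cops, the extra cop among
   them, walk to the retracted starting positions and win with the retracted strategy.
   With 1, 1, 1, 2 cops for Gamma_0, ..., Gamma_3 this gives c(Gamma_n) <= ceil(n/3) for n >= 6. *)

abbreviation \<Gamma> :: "nat \<Rightarrow> bool list set" where
  "\<Gamma> \<equiv> fib_cube_vertices"

section \<open>Cops and robbers on an arbitrary graph\<close>

definition winning_team :: "'a set \<Rightarrow> ('a \<Rightarrow> 'a \<Rightarrow> bool) \<Rightarrow> 'a list \<Rightarrow> bool" where
  "winning_team V adj C \<longleftrightarrow> set C \<subseteq> V \<and> (\<forall>r\<in>V. cop_wins V adj C r)"

lemma k_cop_win_iff_winning_team:
  "k_cop_win V adj k \<longleftrightarrow> (\<exists>C. length C = k \<and> winning_team V adj C)"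
  by (auto simp: k_cop_win_def winning_team_def)

lemma cops_move_ok_iff_list_all2: "cops_move_ok V adj C C' \<longleftrightarrow> list_all2 (move_ok V adj) C C'"
  by (auto simp: cops_move_ok_def list_all2_conv_all_nth)

lemma move_ok_refl [simp]: "move_ok V adj x x"
  by (simp add: move_ok_def)

lemma move_ok_mem: "move_ok V adj x y \<Longrightarrow> x \<in> V \<Longrightarrow> y \<in> V"
  by (auto simp: move_ok_def)

lemma cops_move_ok_subset: "cops_move_ok V adj C C' \<Longrightarrow> set C \<subseteq> V \<Longrightarrow> set C' \<subseteq> V"
  unfolding cops_move_ok_iff_list_all2 list_all2_conv_all_nth
  by (metis in_set_conv_nth move_ok_mem nth_mem subset_iff)

lemma cop_wins_if_move_ok:
  assumes "c \<in> set C" "move_ok V adj c r"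
  shows "cop_wins V adj C r"
proof -
  obtain i where i: "i < length C" "C ! i = c"
    using assms(1) by (metis in_set_conv_nth)
  show ?thesis
  proof (rule cop_wins.step[where C' = "C[i := r]"])
    show "cops_move_ok V adj C (C[i := r])"
      using assms(2) i by (auto simp: cops_move_ok_def nth_list_update)
  qed (use i in \<open>simp add: set_update_memI\<close>)
qed

lemma cop_wins_mset_eq:
  assumes "cop_wins V adj C r" "mset C' = mset C"
  shows "cop_wins V adj C' r"
  using assms
proof (induction arbitrary: C' rule: cop_wins.induct)
  case (caught r C)
  then show ?case by (metis cop_wins.caught mset_eq_setD)
next
  case (step C D r)
  obtain p where p: "p permutes {..<length C}" "permute_list p C = C'"
    using mset_eq_permutation[OF step.prems] .
  have "length D = length C"
    using step.hyps(1) by (simp add: cops_move_ok_def)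
  have "cops_move_ok V adj C' (permute_list p D)"
    using step.hyps(1) p(1) unfolding p(2)[symmetric]
    by (simp add: cops_move_ok_iff_list_all2 list_all2_permute_list_iff)
  moreover have "mset (permute_list p D) = mset D"
    using p \<open>length D = length C\<close> by simp
  ultimately show ?case
    using step.IH by (metis cop_wins.step mset_eq_setD)
qed

text \<open>The cops play the images of their moves under the retraction.\<close>

lemma cop_wins_retract:
  assumes "cop_wins V adj C r" "set C \<subseteq> V" "r \<in> W" "W \<subseteq> V"
    and fix_W: "\<And>x. x \<in> W \<Longrightarrow> \<rho> x = x"
    and moves: "\<And>x y. x \<in> V \<Longrightarrow> move_ok V adj x y \<Longrightarrow> move_ok W adj (\<rho> x) (\<rho> y)"
  shows "cop_wins W adj (map \<rho> C) r"
  using assms(1-3)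
proof (induction rule: cop_wins.induct)
  case (caught r C)
  then show ?case using fix_W by (metis cop_wins.caught image_eqI set_map)
next
  case (step C C' r)
  have "cops_move_ok W adj (map \<rho> C) (map \<rho> C')"
    using step.hyps(1) step.prems(1) moves
    by (auto simp: cops_move_ok_def subset_iff)
  moreover have "set C' \<subseteq> V"
    using step.hyps(1) step.prems(1) by (rule cops_move_ok_subset)
  ultimately show ?case
    using step.IH step.prems(2) fix_W \<open>W \<subseteq> V\<close>
    by (intro cop_wins.step) (force simp: move_ok_def)+
qed

lemma winning_team_retract:
  assumes "winning_team V adj C" "W \<subseteq> V" "\<And>x. x \<in> V \<Longrightarrow> \<rho> x \<in> W"
    and "\<And>x. x \<in> W \<Longrightarrow> \<rho> x = x"
    and "\<And>x y. x \<in> V \<Longrightarrow> move_ok V adj x y \<Longrightarrow> move_ok W adj (\<rho> x) (\<rho> y)"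
  shows "winning_team W adj (map \<rho> C)"
  using assms cop_wins_retract[of V adj C _ W \<rho>] by (auto simp: winning_team_def)

lemma k_cop_win_if_dominating:
  assumes "set C \<subseteq> V" "\<And>r. r \<in> V \<Longrightarrow> \<exists>c\<in>set C. move_ok V adj c r"
  shows "k_cop_win V adj (length C)"
  unfolding k_cop_win_def
proof (intro exI[of _ C] conjI ballI)
  fix r assume "r \<in> V"
  then obtain c where "c \<in> set C" "move_ok V adj c r"
    using assms(2) by blast
  then show "cop_wins V adj C r"
    by (rule cop_wins_if_move_ok)
qed (use assms(1) in simp_all)

section \<open>Hamming distance\<close>

fun hamming :: "bool list \<Rightarrow> bool list \<Rightarrow> nat" where
  "hamming (x # xs) (y # ys) = (if x = y then 0 else 1) + hamming xs ys"
| "hamming _ _ = 0"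

lemma card_mismatches_eq_hamming:
  "length xs = length ys \<Longrightarrow> card {i. i < length xs \<and> xs ! i \<noteq> ys ! i} = hamming xs ys"
proof (induction xs ys rule: list_induct2)
  case (Cons x xs y ys)
  have "{i. i < length (x # xs) \<and> (x # xs) ! i \<noteq> (y # ys) ! i}
      = (if x = y then {} else {0}) \<union> Suc ` {i. i < length xs \<and> xs ! i \<noteq> ys ! i}"
  proof (rule set_eqI)
    fix i
    show "i \<in> {i. i < length (x # xs) \<and> (x # xs) ! i \<noteq> (y # ys) ! i} \<longleftrightarrow>
        i \<in> (if x = y then {} else {0}) \<union> Suc ` {i. i < length xs \<and> xs ! i \<noteq> ys ! i}"
      by (cases i) auto
  qed
  then show ?case
    using Cons.IH by (simp add: card_image)
qed simp

lemma hypercube_adj_iff_hamming: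
  "hypercube_adj xs ys \<longleftrightarrow> length xs = length ys \<and> hamming xs ys = 1"
  unfolding hypercube_adj_def using card_mismatches_eq_hamming[of xs ys] by auto

lemma hamming_append:
  "length a = length a' \<Longrightarrow> hamming (a @ b) (a' @ b') = hamming a a' + hamming b b'"
  by (induction a a' rule: list_induct2) auto

lemma hamming_eq_0_iff: "length a = length b \<Longrightarrow> hamming a b = 0 \<longleftrightarrow> a = b"
  by (induction a b rule: list_induct2) auto

lemma hamming_commute: "hamming a b = hamming b a"
  by (induction a b rule: hamming.induct) auto

lemma hamming_self [simp]: "hamming a a = 0"
  by (induction a) auto

lemma hamming_replicate_False: "length k = n \<Longrightarrow> hamming (replicate n False) k = count_list k True"
  by (induction k arbitrary: n) auto

lemma hamming_update_self: "i < length x \<Longrightarrow> x ! i \<noteq> c \<Longrightarrow> hamming x (x[i := c]) = 1"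
proof (induction x arbitrary: i)
  case (Cons a x)
  then show ?case by (cases i) auto
qed simp

lemma hamming_update_toward:
  "length x = length y \<Longrightarrow> i < length x \<Longrightarrow> x ! i \<noteq> y ! i \<Longrightarrow>
    hamming (x[i := y ! i]) y < hamming x y"
proof (induction x y arbitrary: i rule: list_induct2)
  case (Cons a x b y)
  then show ?case by (cases i) auto
qed simp

lemma hypercube_adj_commute: "hypercube_adj x y \<longleftrightarrow> hypercube_adj y x"
  by (metis hamming_commute hypercube_adj_iff_hamming)

lemma hypercube_adj_append:
  assumes "length a = length a'" "length b = length b'"
  shows "hypercube_adj (a @ b) (a' @ b') \<longleftrightarrow>
    a = a' \<and> hypercube_adj b b' \<or> b = b' \<and> hypercube_adj a a'"
  using assms hamming_append[of a a' b b'] hamming_eq_0_iff[of a a'] hamming_eq_0_iff[of b b']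
  by (auto simp: hypercube_adj_iff_hamming)

lemma move_ok_iff_hamming:
  "length x = length y \<Longrightarrow> y \<in> V \<Longrightarrow> move_ok V hypercube_adj x y \<longleftrightarrow> hamming x y \<le> 1"
  using hamming_eq_0_iff[of x y] by (auto simp: move_ok_def hypercube_adj_iff_hamming)

section \<open>Fibonacci strings and the Fibonacci cube\<close>

definition fibonacci_string :: "bool list \<Rightarrow> bool" where
  "fibonacci_string xs \<longleftrightarrow> (\<forall>i. Suc i < length xs \<longrightarrow> \<not> (xs ! i \<and> xs ! Suc i))"

lemma fib_cube_vertices_iff: "xs \<in> \<Gamma> n \<longleftrightarrow> length xs = n \<and> fibonacci_string xs"
  by (auto simp: fib_cube_vertices_def fibonacci_string_def)

lemma fibonacci_string_Nil [simp]: "fibonacci_string []"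
  by (simp add: fibonacci_string_def)

lemma fibonacci_string_Cons:
  "fibonacci_string (x # xs) \<longleftrightarrow> fibonacci_string xs \<and> \<not> (x \<and> xs \<noteq> [] \<and> hd xs)"
proof (cases xs)
  case (Cons y ys)
  have "fibonacci_string (x # y # ys) \<longleftrightarrow> \<not> (x \<and> y) \<and> fibonacci_string (y # ys)"
    unfolding fibonacci_string_def
    by (auto simp: nth_Cons split: nat.splits)
  then show ?thesis using Cons by auto
qed (simp add: fibonacci_string_def)

lemma fibonacci_string_append:
  "fibonacci_string (a @ b) \<longleftrightarrow>
    fibonacci_string a \<and> fibonacci_string b \<and> \<not> (a \<noteq> [] \<and> b \<noteq> [] \<and> last a \<and> hd b)"
  by (induction a) (auto simp: fibonacci_string_Cons)

lemma fibonacci_string_replicate_False [simp]: "fibonacci_string (replicate n False)"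
  by (simp add: fibonacci_string_def)

lemma fibonacci_string_mono:
  "length a = length b \<Longrightarrow> (\<And>i. i < length a \<Longrightarrow> a ! i \<Longrightarrow> b ! i) \<Longrightarrow> fibonacci_string b \<Longrightarrow>
    fibonacci_string a"
  unfolding fibonacci_string_def by (metis Suc_lessD)

lemma take_mem_fib_cube: "r \<in> \<Gamma> (m + l) \<Longrightarrow> take m r \<in> \<Gamma> m"
  using fibonacci_string_append[of "take m r" "drop m r"] by (auto simp: fib_cube_vertices_iff)

lemma drop_mem_fib_cube: "r \<in> \<Gamma> (m + l) \<Longrightarrow> drop m r \<in> \<Gamma> l"
  using fibonacci_string_append[of "take m r" "drop m r"] by (auto simp: fib_cube_vertices_iff)

lemma move_ok_fib_cube_split [consumes 2, case_names prefix suffix]: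
  assumes "r \<in> \<Gamma> (m + l)" "move_ok (\<Gamma> (m + l)) hypercube_adj r r'"
  obtains (prefix) "drop m r' = drop m r" "move_ok (\<Gamma> m) hypercube_adj (take m r) (take m r')"
    | (suffix) "take m r' = take m r" "hypercube_adj (drop m r) (drop m r')"
proof (cases "r' = r")
  case False
  with assms have r': "r' \<in> \<Gamma> (m + l)"
    and "hypercube_adj (take m r @ drop m r) (take m r' @ drop m r')"
    by (auto simp: move_ok_def)
  moreover have "length (take m r) = length (take m r')" "length (drop m r) = length (drop m r')"
    using assms(1) r' by (auto simp: fib_cube_vertices_iff)
  ultimately consider "take m r = take m r'" "hypercube_adj (drop m r) (drop m r')"
    | "drop m r = drop m r'" "hypercube_adj (take m r) (take m r')"
    using hypercube_adj_append by blast
  then show ?thesis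
  proof cases
    case 1
    then show ?thesis using suffix by simp
  next
    case 2
    then show ?thesis using prefix take_mem_fib_cube[OF r'] by (simp add: move_ok_def)
  qed
qed (simp add: prefix)

lemma move_ok_take:
  "r \<in> \<Gamma> (m + l) \<Longrightarrow> move_ok (\<Gamma> (m + l)) hypercube_adj r r' \<Longrightarrow>
    move_ok (\<Gamma> m) hypercube_adj (take m r) (take m r')"
  by (metis move_ok_fib_cube_split move_ok_refl)

text \<open>Change first a coordinate where x has a 1 and y a 0, since turning a 1 off cannot create
  adjacent 1s; if there is none, all 1s of x are 1s of y, and turning on any coordinate where they
  differ stays below y.\<close>

lemma fib_cube_step_toward:
  assumes x: "x \<in> \<Gamma> n" and y: "y \<in> \<Gamma> n" and "x \<noteq> y"
  shows "\<exists>x'. x' \<in> \<Gamma> n \<and> hypercube_adj x x' \<and> hamming x' y < hamming x y"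
proof -
  have len: "length x = n" "length y = n" and fib: "fibonacci_string x" "fibonacci_string y"
    using x y by (auto simp: fib_cube_vertices_iff)
  have "\<exists>i<n. x ! i \<noteq> y ! i"
    using \<open>x \<noteq> y\<close> len by (auto simp: list_eq_iff_nth_eq)
  then obtain i where i: "i < n" "x ! i \<noteq> y ! i"
    by blast
  obtain j where j: "j < n" "x ! j \<noteq> y ! j" and "fibonacci_string (x[j := y ! j])"
  proof (cases "\<exists>j<n. x ! j \<and> \<not> y ! j")
    case True
    then obtain j where j: "j < n" "x ! j" "\<not> y ! j" by blast
    have "fibonacci_string (x[j := y ! j])"
      using j len
      by (intro fibonacci_string_mono[OF _ _ fib(1)]) (auto simp: nth_list_update split: if_splits)
    with j show ?thesis using that by simp
  next
    case False
    have "fibonacci_string (x[i := y ! i])"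
      using False len i
      by (intro fibonacci_string_mono[OF _ _ fib(2)]) (auto simp: nth_list_update split: if_splits)
    then show ?thesis using that i by blast
  qed
  moreover have "hypercube_adj x (x[j := y ! j])"
    using hamming_update_self[of j x] j len by (simp add: hypercube_adj_iff_hamming)
  moreover have "hamming (x[j := y ! j]) y < hamming x y"
    using hamming_update_toward[of x y j] j len by simp
  ultimately show ?thesis
    using len by (intro exI[of _ "x[j := y ! j]"]) (simp add: fib_cube_vertices_iff)
qed

lemma cops_step_toward:
  assumes "length F = length T" "set F \<subseteq> \<Gamma> n" "set T \<subseteq> \<Gamma> n" "F \<noteq> T"
  shows "\<exists>F'. cops_move_ok (\<Gamma> n) hypercube_adj F F' \<and>
    sum_list (map2 hamming F' T) < sum_list (map2 hamming F T)"
proof -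
  have "\<exists>F'. list_all2 (move_ok (\<Gamma> n) hypercube_adj) F F' \<and>
      sum_list (map2 hamming F' T) \<le> sum_list (map2 hamming F T) \<and>
      (F \<noteq> T \<longrightarrow> sum_list (map2 hamming F' T) < sum_list (map2 hamming F T))"
    using assms(1-3)
  proof (induction F T rule: list_induct2)
    case (Cons x F y T)
    have "\<exists>x'. move_ok (\<Gamma> n) hypercube_adj x x' \<and> hamming x' y \<le> hamming x y \<and>
        (x \<noteq> y \<longrightarrow> hamming x' y < hamming x y)"
    proof (cases "x = y")
      case True
      then show ?thesis by (intro exI[of _ x]) simp
    next
      case False
      then show ?thesis
        using fib_cube_step_toward[of x n y] Cons.prems by (auto simp: move_ok_def)
    qed
    then obtain x' where x': "move_ok (\<Gamma> n) hypercube_adj x x'" "hamming x' y \<le> hamming x y"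
      "x \<noteq> y \<longrightarrow> hamming x' y < hamming x y"
      by blast
    obtain F' where "list_all2 (move_ok (\<Gamma> n) hypercube_adj) F F'"
      "sum_list (map2 hamming F' T) \<le> sum_list (map2 hamming F T)"
      "F \<noteq> T \<longrightarrow> sum_list (map2 hamming F' T) < sum_list (map2 hamming F T)"
      using Cons by auto
    with x' show ?case
      by (intro exI[of _ "x' # F'"]) auto
  qed simp
  then show ?thesis
    using assms(4) by (auto simp: cops_move_ok_iff_list_all2)
qed

lemma fib_cube4:
  "\<Gamma> 4 = {[False, False, False, False], [True, False, False, False], [False, True, False, False],
    [False, False, True, False], [False, False, False, True], [True, False, True, False],
    [True, False, False, True], [False, True, False, True]}"
proof (intro set_eqI iffI)
  fix k assume "k \<in> \<Gamma> 4"
  moreover from this obtain a b c d where "k = [a, b, c, d]"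
    by (auto simp: fib_cube_vertices_iff numeral_eq_Suc length_Suc_conv)
  ultimately show "k \<in> {[False, False, False, False], [True, False, False, False],
    [False, True, False, False], [False, False, True, False], [False, False, False, True],
    [True, False, True, False], [True, False, False, True], [False, True, False, True]}"
    by (cases a; cases b; cases c; cases d)
      (simp_all add: fib_cube_vertices_iff fibonacci_string_Cons)
qed (auto simp: fib_cube_vertices_iff fibonacci_string_Cons)

lemma count_True_le_2_if_fib_cube4: "k \<in> \<Gamma> 4 \<Longrightarrow> count_list k True \<le> 2"
  by (auto simp: fib_cube4)

lemma count_True_less_if_fib_cube4_adj:
  "k \<in> \<Gamma> 4 \<Longrightarrow> k' \<in> \<Gamma> 4 \<Longrightarrow> hypercube_adj k k' \<Longrightarrow> 2 \<le> count_list k' True \<Longrightarrow>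
    count_list k True < count_list k' True"
  by (auto simp: fib_cube4 hypercube_adj_iff_hamming)

section \<open>Layers and their retractions\<close>

definition layer :: "nat \<Rightarrow> bool list \<Rightarrow> bool list set" where
  "layer m k = {s \<in> \<Gamma> m. fibonacci_string (s @ k)}"

lemma append_mem_fib_cube_iff: "s @ k \<in> \<Gamma> (m + length k) \<longleftrightarrow> s \<in> layer m k"
  by (auto simp: layer_def fib_cube_vertices_iff fibonacci_string_append)

lemma layer_subset: "layer m k \<subseteq> \<Gamma> m"
  by (auto simp: layer_def)

lemma layer_replicate_False: "layer m (replicate l False) = \<Gamma> m"
  by (auto simp: layer_def fib_cube_vertices_iff fibonacci_string_append)

lemma append_replicate_False_mem_fib_cube: "s \<in> \<Gamma> m \<Longrightarrow> s @ replicate l False \<in> \<Gamma> (m + l)"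
  using append_mem_fib_cube_iff[of s "replicate l False" m] by (simp add: layer_replicate_False)

lemma move_ok_layer_iff:
  assumes "length s = m" "length s' = m"
  shows "move_ok (layer m k) hypercube_adj s s' \<longleftrightarrow>
    move_ok (\<Gamma> (m + length k)) hypercube_adj (s @ k) (s' @ k)"
  using assms hypercube_adj_append[of s s' k k]
  by (auto simp: move_ok_def append_mem_fib_cube_iff)

lemma move_ok_within_layer:
  assumes "s \<in> layer m k" "move_ok (\<Gamma> (m + length k)) hypercube_adj (s @ k) r'" "drop m r' = k"
  obtains s' where "r' = s' @ k" "move_ok (layer m k) hypercube_adj s s'"
proof -
  have "r' \<in> \<Gamma> (m + length k)"
    using move_ok_mem[OF assms(2)] assms(1) append_mem_fib_cube_iff by blast
  then have "length (take m r') = m"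
    by (simp add: fib_cube_vertices_iff)
  moreover have "r' = take m r' @ k"
    using assms(3) by (metis append_take_drop_id)
  moreover have "length s = m"
    using assms(1) by (simp add: layer_def fib_cube_vertices_iff)
  ultimately show ?thesis
    using that assms(2) move_ok_layer_iff by metis
qed

lemma not_fibonacci_string_append:
  assumes "fibonacci_string s" "fibonacci_string k" "\<not> fibonacci_string (s @ k)"
  shows "s \<noteq> []" "last s" "k \<noteq> []" "hd k"
  using assms by (auto simp: fibonacci_string_append)

definition layer_retraction :: "bool list \<Rightarrow> bool list \<Rightarrow> bool list" where
  "layer_retraction k s = (if fibonacci_string (s @ k) then s else butlast s @ [False])"

lemma layer_retraction_id: "s \<in> layer m k \<Longrightarrow> layer_retraction k s = s"
  by (simp add: layer_def layer_retraction_def)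

lemma layer_retraction_mem:
  assumes "s \<in> \<Gamma> m" "fibonacci_string k"
  shows "layer_retraction k s \<in> layer m k"
proof (cases "fibonacci_string (s @ k)")
  case False
  have s: "length s = m" "fibonacci_string s"
    using assms(1) by (auto simp: fib_cube_vertices_iff)
  then have "s \<noteq> []"
    using not_fibonacci_string_append assms(2) False by blast
  then have "fibonacci_string (butlast s @ [last s])"
    using s(2) by simp
  then have "fibonacci_string (butlast s)"
    by (simp add: fibonacci_string_append)
  then show ?thesis
    using False assms(2) s(1) \<open>s \<noteq> []\<close>
    by (auto simp: layer_retraction_def layer_def fib_cube_vertices_iff fibonacci_string_append
        fibonacci_string_Cons)
qed (use assms(1) in \<open>simp add: layer_retraction_def layer_def\<close>)

text \<open>If an edge of the Fibonacci cube leaves the layer of k, it does so by switching on the last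
  bit, so both of its ends retract to the same string.\<close>

lemma layer_retraction_eq_if_adj:
  assumes "hypercube_adj s s'" "fibonacci_string s" "fibonacci_string s'" "fibonacci_string k"
    and "fibonacci_string (s @ k)" "\<not> fibonacci_string (s' @ k)"
  shows "layer_retraction k s = layer_retraction k s'"
proof -
  have s': "s' \<noteq> []" "last s'" "k \<noteq> []" "hd k"
    using not_fibonacci_string_append assms(3,4,6) by blast+
  have len: "length s = length s'"
    using assms(1) by (simp add: hypercube_adj_iff_hamming)
  then have "s \<noteq> []"
    using s'(1) by auto
  then have "\<not> last s"
    using assms(5) s'(3,4) by (simp add: fibonacci_string_append)
  then have "hypercube_adj (butlast s @ [False]) (butlast s' @ [True])"
    using assms(1) \<open>s \<noteq> []\<close> s'(1,2) by (metis (full_types) append_butlast_last_id)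
  then have "butlast s = butlast s'"
    using len by (simp add: hypercube_adj_append)
  then have "s = butlast s' @ [False]"
    using \<open>s \<noteq> []\<close> \<open>\<not> last s\<close> by (metis (full_types) append_butlast_last_id)
  then show ?thesis
    using assms(5,6) by (simp add: layer_retraction_def)
qed

lemma move_ok_layer_retraction:
  assumes "s \<in> \<Gamma> m" "move_ok (\<Gamma> m) hypercube_adj s s'" "fibonacci_string k"
  shows "move_ok (layer m k) hypercube_adj (layer_retraction k s) (layer_retraction k s')"
proof (cases "s' = s")
  case False
  with assms(2) have s': "s' \<in> \<Gamma> m" and adj: "hypercube_adj s s'"
    by (auto simp: move_ok_def)
  have fib: "fibonacci_string s" "fibonacci_string s'"
    using assms(1) s' by (auto simp: fib_cube_vertices_iff)
  have mem: "layer_retraction k s' \<in> layer m k"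
    using layer_retraction_mem[OF s' assms(3)] .
  consider "fibonacci_string (s @ k)" "fibonacci_string (s' @ k)"
    | "\<not> fibonacci_string (s @ k)" "\<not> fibonacci_string (s' @ k)"
    | "fibonacci_string (s @ k) \<noteq> fibonacci_string (s' @ k)"
    by blast
  then show ?thesis
  proof cases
    case 1
    then show ?thesis
      using adj mem by (simp add: move_ok_def layer_retraction_def)
  next
    case 2
    then have "s \<noteq> []" "last s" "s' \<noteq> []" "last s'"
      using not_fibonacci_string_append fib assms(3) by blast+
    then have "hypercube_adj (butlast s @ [True]) (butlast s' @ [True])"
      using adj by (metis (full_types) append_butlast_last_id)
    moreover have len: "length (butlast s) = length (butlast s')"
      using adj by (simp add: hypercube_adj_iff_hamming)
    ultimately have "hypercube_adj (butlast s @ [False]) (butlast s' @ [False])"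
      by (simp add: hypercube_adj_iff_hamming hamming_append[OF len])
    then show ?thesis
      using 2 mem by (simp add: move_ok_def layer_retraction_def)
  next
    case 3
    then have "layer_retraction k s = layer_retraction k s'"
      using layer_retraction_eq_if_adj[of s s' k] layer_retraction_eq_if_adj[of s' s k]
        adj fib assms(3) hypercube_adj_commute by metis
    then show ?thesis by simp
  qed
qed simp

lemma cops_move_ok_layer_lift:
  assumes "cops_move_ok (layer m k) hypercube_adj D D'" "set D \<subseteq> layer m k"
  shows "cops_move_ok (\<Gamma> (m + length k)) hypercube_adj (map (\<lambda>d. d @ k) D) (map (\<lambda>d. d @ k) D')"
proof -
  have D': "set D' \<subseteq> layer m k" "length D' = length D"
    using cops_move_ok_subset[OF assms] assms(1) by (auto simp: cops_move_ok_def)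
  have len: "length d = m" if "d \<in> layer m k" for d
    using that by (simp add: layer_def fib_cube_vertices_iff)
  show ?thesis
    unfolding cops_move_ok_def
  proof (intro conjI allI impI)
    fix i
    assume i: "i < length (map (\<lambda>d. d @ k) D)"
    then have "move_ok (layer m k) hypercube_adj (D ! i) (D' ! i)" "D ! i \<in> layer m k"
      "D' ! i \<in> layer m k"
      using assms D' by (auto simp: cops_move_ok_def)
    then show "move_ok (\<Gamma> (m + length k)) hypercube_adj
        (map (\<lambda>d. d @ k) D ! i) (map (\<lambda>d. d @ k) D' ! i)"
      using i D'(2) len move_ok_layer_iff[of "D ! i" m "D' ! i" k] by simp
  qed (use D' in simp)
qed

lemma winning_team_layer:
  assumes "winning_team (\<Gamma> m) hypercube_adj D" "fibonacci_string k"
  shows "winning_team (layer m k) hypercube_adj (map (layer_retraction k) D)"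
  using assms layer_subset layer_retraction_mem layer_retraction_id move_ok_layer_retraction
  by (intro winning_team_retract) auto

section \<open>The shadow and the guard\<close>

definition shadow :: "nat \<Rightarrow> bool list \<Rightarrow> bool list" where
  "shadow m r = take m r @ replicate 4 False"

lemma shadow_append [simp]: "length s = m \<Longrightarrow> shadow m (s @ k) = s @ replicate 4 False"
  by (simp add: shadow_def)

lemma hamming_shadow:
  assumes "r \<in> \<Gamma> (m + 4)"
  shows "hamming (shadow m r) r = count_list (drop m r) True"
proof -
  have "length (take m r) = m" "length (drop m r) = 4"
    using assms by (auto simp: fib_cube_vertices_iff)
  then show ?thesis
    using hamming_append[of "take m r" "take m r" "replicate 4 False" "drop m r"]
    by (simp add: shadow_def hamming_replicate_False)
qed

lemma move_ok_shadow:
  assumes "r \<in> \<Gamma> (m + 4)" "move_ok (\<Gamma> (m + 4)) hypercube_adj r r'"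
  shows "move_ok (\<Gamma> (m + 4)) hypercube_adj (shadow m r) (shadow m r')"
proof -
  have "r' \<in> \<Gamma> (m + 4)"
    using move_ok_mem[OF assms(2,1)] .
  then have "length (take m r) = m" "length (take m r') = m"
    using assms(1) by (auto simp: fib_cube_vertices_iff)
  moreover have "move_ok (layer m (replicate 4 False)) hypercube_adj (take m r) (take m r')"
    using move_ok_take[OF assms] by (simp add: layer_replicate_False)
  ultimately show ?thesis
    by (simp add: move_ok_layer_iff shadow_def)
qed

definition guarded :: "nat \<Rightarrow> bool list \<Rightarrow> bool list list \<Rightarrow> bool list \<Rightarrow> bool" where
  "guarded m g F r \<longleftrightarrow>
    r \<in> \<Gamma> (m + 4) \<and> set F \<subseteq> \<Gamma> (m + 4) \<and> move_ok (\<Gamma> (m + 4)) hypercube_adj g (shadow m r)"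

text \<open>One round with a guard on duty: the guard steps onto the shadow. If the robber then changes
  his suffix without getting next to the guard, the suffix gains a 1; this is the escape.\<close>

lemma guarded_step:
  assumes "guarded m g F r" "cops_move_ok (\<Gamma> (m + 4)) hypercube_adj F F'"
    and escape: "\<And>g' F'' r'. guarded m g' F'' r' \<Longrightarrow> length F'' = length F \<Longrightarrow>
      count_list (drop m r) True < count_list (drop m r') True \<Longrightarrow>
      cop_wins (\<Gamma> (m + 4)) hypercube_adj (g' # F'') r'"
    and continue: "\<And>r'. move_ok (\<Gamma> (m + 4)) hypercube_adj r r' \<Longrightarrow> drop m r' = drop m r \<Longrightarrow>
      cop_wins (\<Gamma> (m + 4)) hypercube_adj (shadow m r # F') r'"
  shows "cop_wins (\<Gamma> (m + 4)) hypercube_adj (g # F) r"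
proof (rule cop_wins.step)
  have r: "r \<in> \<Gamma> (m + 4)" and F: "set F \<subseteq> \<Gamma> (m + 4)"
    using assms(1) by (auto simp: guarded_def)
  show "cops_move_ok (\<Gamma> (m + 4)) hypercube_adj (g # F) (shadow m r # F')"
    using assms(1,2) by (simp add: guarded_def cops_move_ok_iff_list_all2)
  have "cop_wins (\<Gamma> (m + 4)) hypercube_adj (shadow m r # F') r'"
    if move: "move_ok (\<Gamma> (m + 4)) hypercube_adj r r'" for r'
    using r move
  proof (cases rule: move_ok_fib_cube_split)
    case prefix
    then show ?thesis using continue move by simp
  next
    case suffix
    have r': "r' \<in> \<Gamma> (m + 4)"
      using move_ok_mem[OF move r] .
    have shadow_eq: "shadow m r' = shadow m r"
      using suffix by (simp add: shadow_def)
    show ?thesis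
    proof (cases "move_ok (\<Gamma> (m + 4)) hypercube_adj (shadow m r) r'")
      case True
      then show ?thesis by (intro cop_wins_if_move_ok[of "shadow m r"]) simp_all
    next
      case False
      have "length (shadow m r') = length r'"
        using r' by (simp add: shadow_def fib_cube_vertices_iff)
      with False r' have "2 \<le> count_list (drop m r') True"
        using hamming_shadow[OF r'] shadow_eq by (simp add: move_ok_iff_hamming)
      then have "count_list (drop m r) True < count_list (drop m r') True"
        using count_True_less_if_fib_cube4_adj drop_mem_fib_cube r r' suffix(2) by blast
      moreover have "guarded m (shadow m r) F' r'"
        using r' shadow_eq cops_move_ok_subset[OF assms(2) F] by (simp add: guarded_def)
      moreover have "length F' = length F"
        using assms(2) by (simp add: cops_move_ok_def)
      ultimately show ?thesis
        using escape by blast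
    qed
  qed
  then show "r \<in> set (shadow m r # F') \<or>
      (\<forall>r'. move_ok (\<Gamma> (m + 4)) hypercube_adj r r' \<longrightarrow>
        cop_wins (\<Gamma> (m + 4)) hypercube_adj (shadow m r # F') r')"
    by blast
qed

lemma guarded_wins_in_layer:
  assumes k: "k \<in> \<Gamma> 4"
    and escape: "\<And>g F r'. guarded m g F r' \<Longrightarrow> length F = j \<Longrightarrow>
      count_list k True < count_list (drop m r') True \<Longrightarrow>
      cop_wins (\<Gamma> (m + 4)) hypercube_adj (g # F) r'"
    and "cop_wins (layer m k) hypercube_adj D s"
  shows "set D \<subseteq> layer m k \<Longrightarrow> length D = j \<Longrightarrow> s \<in> layer m k \<Longrightarrow>
    move_ok (\<Gamma> (m + 4)) hypercube_adj g (s @ replicate 4 False) \<Longrightarrow>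
    cop_wins (\<Gamma> (m + 4)) hypercube_adj (g # map (\<lambda>d. d @ k) D) (s @ k)"
  using assms(3)
proof (induction arbitrary: g rule: cop_wins.induct)
  case (caught s D)
  then show ?case by (auto intro: cop_wins.caught)
next
  case (step D D' s)
  have lk: "length k = 4"
    using k by (simp add: fib_cube_vertices_iff)
  have ls: "length s = m"
    using step.prems(3) by (simp add: layer_def fib_cube_vertices_iff)
  have D': "set D' \<subseteq> layer m k" "length D' = j"
    using cops_move_ok_subset[OF step.hyps(1) step.prems(1)] step.hyps(1) step.prems(2)
    by (auto simp: cops_move_ok_def)
  have lift_mem: "d @ k \<in> \<Gamma> (m + 4)" if "d \<in> layer m k" for d
    using that append_mem_fib_cube_iff[of d k m] lk by simp
  show ?case
  proof (rule guarded_step)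
    show "guarded m g (map (\<lambda>d. d @ k) D) (s @ k)"
      using step.prems lift_mem ls by (auto simp: guarded_def)
    show "cops_move_ok (\<Gamma> (m + 4)) hypercube_adj (map (\<lambda>d. d @ k) D) (map (\<lambda>d. d @ k) D')"
      using cops_move_ok_layer_lift[OF step.hyps(1) step.prems(1)] lk by simp
  next
    fix g' F r'
    assume "guarded m g' F r'" "length F = length (map (\<lambda>d. d @ k) D)"
      "count_list (drop m (s @ k)) True < count_list (drop m r') True"
    then show "cop_wins (\<Gamma> (m + 4)) hypercube_adj (g' # F) r'"
      using escape step.prems(2) ls by simp
  next
    fix r'
    assume move: "move_ok (\<Gamma> (m + 4)) hypercube_adj (s @ k) r'"
      and "drop m r' = drop m (s @ k)"
    then have "drop m r' = k"
      using ls by simp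
    with move obtain s' where r': "r' = s' @ k"
      and move_layer: "move_ok (layer m k) hypercube_adj s s'"
      using move_ok_within_layer[OF step.prems(3), unfolded lk] by blast
    have s': "s' \<in> layer m k" "length s' = m"
      using move_ok_mem[OF move_layer step.prems(3)] by (auto simp: layer_def fib_cube_vertices_iff)
    have guard: "move_ok (\<Gamma> (m + 4)) hypercube_adj
        (s @ replicate 4 False) (s' @ replicate 4 False)"
      using move_ok_shadow[OF lift_mem[OF step.prems(3)] move] ls s'(2) r' by simp
    show "cop_wins (\<Gamma> (m + 4)) hypercube_adj (shadow m (s @ k) # map (\<lambda>d. d @ k) D') r'"
    proof (cases "s \<in> set D'")
      case True
      then show ?thesis
        using move by (intro cop_wins_if_move_ok[of "s @ k"]) auto
    next
      case False
      then have "cop_wins (\<Gamma> (m + 4)) hypercube_adj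
          ((s @ replicate 4 False) # map (\<lambda>d. d @ k) D') (s' @ k)"
        using step.IH move_layer D' guard s'(1) by blast
      then show ?thesis
        using r' ls by simp
    qed
  qed
qed

section \<open>Four more coordinates cost one more cop\<close>

context
  fixes m :: nat and D0 :: "bool list list"
  assumes team: "winning_team (\<Gamma> m) hypercube_adj D0"
begin

text \<open>With the suffix k fixed, the cops other than the guard walk to the retracted starting
  positions of the team in the layer of k, decreasing their total distance to them every round.\<close>

lemma guarded_wins_unless_escape:
  assumes k: "k \<in> \<Gamma> 4"
    and escape: "\<And>g F r'. guarded m g F r' \<Longrightarrow> length F = length D0 \<Longrightarrow>
      count_list k True < count_list (drop m r') True \<Longrightarrow>
      cop_wins (\<Gamma> (m + 4)) hypercube_adj (g # F) r'"
  shows "guarded m g F r \<Longrightarrow> drop m r = k \<Longrightarrow> length F = length D0 \<Longrightarrow>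
    cop_wins (\<Gamma> (m + 4)) hypercube_adj (g # F) r"
proof (induction "sum_list (map2 hamming F (map (\<lambda>d. layer_retraction k d @ k) D0))"
    arbitrary: g F r rule: less_induct)
  case less
  let ?T = "map (\<lambda>d. layer_retraction k d @ k) D0"
  have lk: "length k = 4" and fib_k: "fibonacci_string k"
    using k by (auto simp: fib_cube_vertices_iff)
  have layer_team: "winning_team (layer m k) hypercube_adj (map (layer_retraction k) D0)"
    using winning_team_layer[OF team fib_k] .
  have T: "set ?T \<subseteq> \<Gamma> (m + 4)"
    using layer_team append_mem_fib_cube_iff[of _ k m] lk by (auto simp: winning_team_def)
  have r: "r \<in> \<Gamma> (m + 4)" and F: "set F \<subseteq> \<Gamma> (m + 4)"
    using less.prems(1) by (auto simp: guarded_def)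
  define s where "s = take m r"
  have r_eq: "r = s @ k"
    using less.prems(2) by (metis append_take_drop_id s_def)
  have s: "s \<in> layer m k" "length s = m"
    using r lk append_mem_fib_cube_iff[of s k m] by (auto simp: r_eq fib_cube_vertices_iff)
  show ?case
  proof (cases "F = ?T")
    case True
    have "cop_wins (layer m k) hypercube_adj (map (layer_retraction k) D0) s"
      using layer_team s(1) by (simp add: winning_team_def)
    then have "cop_wins (\<Gamma> (m + 4)) hypercube_adj
        (g # map (\<lambda>d. d @ k) (map (layer_retraction k) D0)) (s @ k)"
      using layer_team s less.prems(1) r_eq
      by (intro guarded_wins_in_layer[OF k escape]) (auto simp: winning_team_def guarded_def)
    then show ?thesis
      using True r_eq by (simp add: comp_def)
  next
    case False
    obtain F' where F': "cops_move_ok (\<Gamma> (m + 4)) hypercube_adj F F'"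
      "sum_list (map2 hamming F' ?T) < sum_list (map2 hamming F ?T)"
      using cops_step_toward[OF _ F T False] less.prems(3) by auto
    show ?thesis
    proof (rule guarded_step[OF less.prems(1) F'(1)])
      fix g' F'' r'
      assume "guarded m g' F'' r'" "length F'' = length F"
        "count_list (drop m r) True < count_list (drop m r') True"
      then show "cop_wins (\<Gamma> (m + 4)) hypercube_adj (g' # F'') r'"
        using escape less.prems(2,3) by simp
    next
      fix r'
      assume move: "move_ok (\<Gamma> (m + 4)) hypercube_adj r r'" and "drop m r' = drop m r"
      moreover have "guarded m (shadow m r) F' r'"
        using move_ok_shadow[OF r move] move_ok_mem[OF move r] cops_move_ok_subset[OF F'(1) F]
        by (simp add: guarded_def)
      moreover have "length F' = length D0"
        using F'(1) less.prems(3) by (simp add: cops_move_ok_def)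
      ultimately show "cop_wins (\<Gamma> (m + 4)) hypercube_adj (shadow m r # F') r'"
        using less.hyps[OF F'(2)] less.prems(2) by simp
    qed
  qed
qed

lemma guarded_wins:
  "guarded m g F r \<Longrightarrow> length F = length D0 \<Longrightarrow> cop_wins (\<Gamma> (m + 4)) hypercube_adj (g # F) r"
proof (induction "2 - count_list (drop m r) True" arbitrary: g F r rule: less_induct)
  case less
  have r: "r \<in> \<Gamma> (m + 4)"
    using less.prems(1) by (simp add: guarded_def)
  show ?case
  proof (rule guarded_wins_unless_escape[OF drop_mem_fib_cube[OF r] _ less.prems(1) refl])
    fix g' F' r'
    assume r': "guarded m g' F' r'" "length F' = length D0"
      and more: "count_list (drop m r) True < count_list (drop m r') True"
    have "count_list (drop m r') True \<le> 2"
      using r'(1) count_True_le_2_if_fib_cube4 drop_mem_fib_cube by (auto simp: guarded_def)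
    with more have "2 - count_list (drop m r') True < 2 - count_list (drop m r) True"
      by linarith
    then show "cop_wins (\<Gamma> (m + 4)) hypercube_adj (g' # F') r'"
      using less.hyps r' by blast
  qed (rule less.prems(2))
qed

lemma guard_takes_over:
  assumes "c \<in> set C" "move_ok (\<Gamma> (m + 4)) hypercube_adj c (shadow m r)"
    and "set C \<subseteq> \<Gamma> (m + 4)" "length C = Suc (length D0)" "r \<in> \<Gamma> (m + 4)"
  shows "cop_wins (\<Gamma> (m + 4)) hypercube_adj C r"
proof (rule cop_wins_mset_eq)
  show "cop_wins (\<Gamma> (m + 4)) hypercube_adj (c # remove1 c C) r"
    using assms set_remove1_subset[of c C]
    by (intro guarded_wins) (auto simp: guarded_def length_remove1)
  show "mset C = mset (c # remove1 c C)"
    using assms(1) by simp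
qed

text \<open>Before a guard is on duty, the team chases the shadow inside the layer of 0000, while the
  extra cop e waits.\<close>

lemma shadow_chase_wins:
  assumes "cop_wins (\<Gamma> m) hypercube_adj D u"
  shows "set D \<subseteq> \<Gamma> m \<Longrightarrow> length D = length D0 \<Longrightarrow> e \<in> \<Gamma> (m + 4) \<Longrightarrow> r \<in> \<Gamma> (m + 4) \<Longrightarrow>
    take m r = u \<Longrightarrow> cop_wins (\<Gamma> (m + 4)) hypercube_adj (e # map (\<lambda>d. d @ replicate 4 False) D) r"
  using assms
proof (induction arbitrary: r rule: cop_wins.induct)
  case (caught u D)
  have "set (map (\<lambda>d. d @ replicate 4 False) D) \<subseteq> \<Gamma> (m + 4)"
    using caught.prems(1) append_replicate_False_mem_fib_cube by auto
  then show ?case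
    using caught by (intro guard_takes_over[of "u @ replicate 4 False"]) (auto simp: shadow_def)
next
  case (step D D' u)
  let ?lift = "map (\<lambda>d. d @ replicate 4 False)"
  have D': "set D' \<subseteq> \<Gamma> m" "length D' = length D0"
    using cops_move_ok_subset[OF step.hyps(1) step.prems(1)] step.hyps(1) step.prems(2)
    by (auto simp: cops_move_ok_def)
  have lift_D': "set (?lift D') \<subseteq> \<Gamma> (m + 4)"
    using D'(1) append_replicate_False_mem_fib_cube by auto
  show ?case
  proof (rule cop_wins.step)
    show "cops_move_ok (\<Gamma> (m + 4)) hypercube_adj (e # ?lift D) (e # ?lift D')"
      using cops_move_ok_layer_lift[of m "replicate 4 False" D D'] step.hyps(1) step.prems(1)
      by (simp add: layer_replicate_False cops_move_ok_iff_list_all2)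
    have "cop_wins (\<Gamma> (m + 4)) hypercube_adj (e # ?lift D') r'"
      if move: "move_ok (\<Gamma> (m + 4)) hypercube_adj r r'" for r'
    proof (cases "u \<in> set D'")
      case True
      have "move_ok (\<Gamma> (m + 4)) hypercube_adj (u @ replicate 4 False) (shadow m r')"
        using move_ok_shadow[OF step.prems(4) move] step.prems(5) by (simp add: shadow_def)
      then show ?thesis
        using True lift_D' D' step.prems(3) move_ok_mem[OF move step.prems(4)]
        by (intro guard_takes_over[of "u @ replicate 4 False"]) auto
    next
      case False
      have "move_ok (\<Gamma> m) hypercube_adj u (take m r')"
        using move_ok_take[OF step.prems(4) move] step.prems(5) by simp
      then show ?thesis
        using step.IH False D' step.prems(3) move_ok_mem[OF move step.prems(4)] by blast
    qed
    then show "r \<in> set (e # ?lift D') \<or>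
        (\<forall>r'. move_ok (\<Gamma> (m + 4)) hypercube_adj r r' \<longrightarrow>
          cop_wins (\<Gamma> (m + 4)) hypercube_adj (e # ?lift D') r')"
      by blast
  qed
qed

end

theorem k_cop_win_fib_cube_add4:
  assumes "k_cop_win (\<Gamma> m) hypercube_adj j"
  shows "k_cop_win (\<Gamma> (m + 4)) hypercube_adj (Suc j)"
proof -
  obtain D0 where D0: "length D0 = j" "winning_team (\<Gamma> m) hypercube_adj D0"
    using assms by (auto simp: k_cop_win_iff_winning_team)
  let ?C = "replicate (m + 4) False # map (\<lambda>d. d @ replicate 4 False) D0"
  have "winning_team (\<Gamma> (m + 4)) hypercube_adj ?C"
    unfolding winning_team_def
  proof (intro conjI ballI)
    show "set ?C \<subseteq> \<Gamma> (m + 4)"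
      using D0(2) append_replicate_False_mem_fib_cube
      by (auto simp: winning_team_def fib_cube_vertices_iff)
    fix r
    assume r: "r \<in> \<Gamma> (m + 4)"
    have "cop_wins (\<Gamma> m) hypercube_adj D0 (take m r)"
      using D0(2) take_mem_fib_cube[OF r] by (simp add: winning_team_def)
    then show "cop_wins (\<Gamma> (m + 4)) hypercube_adj ?C r"
      by (rule shadow_chase_wins[OF D0(2)])
        (use D0(2) r in \<open>auto simp: winning_team_def fib_cube_vertices_iff\<close>)
  qed
  moreover have "length ?C = Suc j"
    using D0(1) by simp
  ultimately show ?thesis
    unfolding k_cop_win_iff_winning_team by blast
qed

section \<open>Small Fibonacci cubes and the bound\<close>

lemma count_True_le_1_if_fib_cube_le_2:
  assumes "r \<in> \<Gamma> n" "n \<le> 2"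
  shows "count_list r True \<le> 1"
proof -
  have "length r \<le> 2" "fibonacci_string r"
    using assms by (auto simp: fib_cube_vertices_iff)
  then show ?thesis
    by (cases r rule: remdups_adj.cases) (auto simp: fibonacci_string_Cons)
qed

lemma k_cop_win_fib_cube_le_2:
  assumes "n \<le> 2"
  shows "k_cop_win (\<Gamma> n) hypercube_adj 1"
proof -
  have "k_cop_win (\<Gamma> n) hypercube_adj (length [replicate n False])"
  proof (rule k_cop_win_if_dominating)
    fix r
    assume "r \<in> \<Gamma> n"
    then have "move_ok (\<Gamma> n) hypercube_adj (replicate n False) r"
      using count_True_le_1_if_fib_cube_le_2[OF _ assms]
      by (simp add: move_ok_iff_hamming hamming_replicate_False fib_cube_vertices_iff)
    then show "\<exists>c\<in>set [replicate n False]. move_ok (\<Gamma> n) hypercube_adj c r"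
      by simp
  qed (simp add: fib_cube_vertices_iff)
  then show ?thesis by simp
qed

lemma k_cop_win_fib_cube3: "k_cop_win (\<Gamma> 3) hypercube_adj 2"
proof -
  let ?C = "[[False, False, False], [True, False, True]]"
  have "k_cop_win (\<Gamma> 3) hypercube_adj (length ?C)"
  proof (rule k_cop_win_if_dominating)
    fix r
    assume r: "r \<in> \<Gamma> 3"
    then obtain a b c where abc: "r = [a, b, c]"
      by (auto simp: fib_cube_vertices_iff numeral_eq_Suc length_Suc_conv)
    have "\<exists>c\<in>set ?C. hamming c r \<le> 1"
      using r unfolding abc
      by (cases a; cases b; cases c) (auto simp: fib_cube_vertices_iff fibonacci_string_Cons)
    then show "\<exists>c\<in>set ?C. move_ok (\<Gamma> 3) hypercube_adj c r"
      using r abc by (auto simp: move_ok_iff_hamming)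
  qed (auto simp: fib_cube_vertices_iff fibonacci_string_Cons)
  then show ?thesis by (simp add: numeral_2_eq_2)
qed

lemma k_cop_win_fib_cube:
  "k_cop_win (\<Gamma> n) hypercube_adj (n div 4 + (if n mod 4 = 3 then 2 else 1))"
proof (induction n rule: less_induct)
  case (less n)
  show ?case
  proof (cases "n < 4")
    case True
    then consider "n \<le> 2" | "n = 3" by linarith
    then show ?thesis
      using k_cop_win_fib_cube_le_2 k_cop_win_fib_cube3 by cases (auto simp: numeral_2_eq_2)
  next
    case False
    then obtain m where n: "n = m + 4"
      by (metis add.commute le_Suc_ex not_less)
    then show ?thesis
      using k_cop_win_fib_cube_add4[OF less.IH[of m]] by simp
  qed
qed

theorem theorem4p2:
  fixes n :: nat
  assumes "n \<ge> 6"
  shows "int (cop_number (fib_cube_vertices n) hypercube_adj) \<le> ceiling (real n / 3)"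
proof -
  define k where "k = n div 4 + (if n mod 4 = 3 then 2 else 1)"
  have bound: "cop_number (fib_cube_vertices n) hypercube_adj \<le> k"
    unfolding cop_number_def k_def by (rule Least_le) (rule k_cop_win_fib_cube)
  have "3 * k \<le> n + 2"
    unfolding k_def using assms by presburger
  then have "real k - 1 < real n / 3"
    by linarith
  then have "int k \<le> ceiling (real n / 3)"
    by (simp add: le_ceiling_iff)
  with bound show ?thesis
    by linarith
qed

end
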